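(* Fix $\alpha\in(0,1/2)$, $m$, $n$. For all sufficiently large $T$, in every run of Algorithm 1 in which the small gradient assumption holds, the regret $\sum_{t=1}^T L^t(\mathbf{w}^t) - \min_{\mathbf{w}\in\Delta^m}\sum_{t=1}^T L^t(\mathbf{w})$ is at most \[\left(240 + \frac{12}{\alpha}\right) m^{(3-\alpha)/2}\, n\, \sqrt{T}\ln T.\]
   Context: Setting. There are $m$ experts and $n$ outcomes; $\Delta^k$ is the probability simplex in $\mathbb{R}^k$. For reports $\mathbf{p}^1,\dots,\mathbf{p}^m\in\Delta^n$ and $\mathbf{w}\in\Delta^m$, the logarithmic pool is $p^*_j(\mathbf{w}) = \frac{\prod_k (p^k_j)^{w_k}}{\sum_{\ell}\prod_k (p^k_\ell)^{w_k}}$. At each time $t\in[T]$, reports $\mathbf{p}^{t,1},\dots,\mathbf{p}^{t,m}$ and an outcome $j_t$ are revealed, with loss $L^t(\mathbf{w}) := -\ln p^*_{j_t}(\mathbf{w})$ and, by convention, $\partial_i L^t(\mathbf{w}) := \sum_{\ell} p^*_\ell(\mathbf{w}) \ln p^{t,i}_\ell - \ln p^{t,i}_{j_t}$. Algorithm 1 (parameter $\alpha \in (0,1/2)$): $R(\mathbf{w}) = -\frac{1}{\alpha}\sum_i w_i^\alpha$, $\eta = \frac{1}{\sqrt{T}\ln T}\cdot\frac{1}{12 m^{(1+\alpha)/2} n}$, $\mathbf{w}^1 = (1/m,\dots,1/m)$, $\eta_0=+\infty$. For $t=1,\dots,T$: if $\eta \le \min_i (w_i^t)^\alpha$ set $\eta_t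 = \min(\eta_{t-1},\eta)$, else $\eta_t = \min(\eta_{t-1}, \min_i w_i^t)$; then $\mathbf{w}^{t+1}\in\Delta^m$ is defined by $-(w_i^{t+1})^{\alpha-1} = -(w_i^t)^{\alpha-1} - \eta_t\partial_i L^t(\mathbf{w}^t) + c$ for all $i$, with $c$ the unique constant making $\sum_i w_i^{t+1}=1$. Let $\gamma := 12 n \ln T$. The small gradient assumption holds for a run if for every $t\in[T]$ and $i\in[m]$: $-\frac{\gamma}{w_i^t} \le \partial_i L^t(\mathbf{w}^t) \le \gamma$. *)

theory Defs
  imports "HOL-Analysis.Analysis"
begin

text \<open>Experts are indexed by i < m, outcomes by j < n, time steps by t \<in> {1..T}.
  Vectors are functions nat \<Rightarrow> real; only the entries with index below the
  dimension matter.\<close>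

definition prob_simplex :: "nat \<Rightarrow> (nat \<Rightarrow> real) set" where
  "prob_simplex k = {w. (\<forall>i<k. 0 \<le> w i) \<and> (\<Sum>i<k. w i) = 1}"

definition log_pool :: "nat \<Rightarrow> nat \<Rightarrow> (nat \<Rightarrow> nat \<Rightarrow> real) \<Rightarrow> (nat \<Rightarrow> real) \<Rightarrow> nat \<Rightarrow> real" where
  "log_pool m n p w j =
     (\<Prod>k<m. p k j powr w k) / (\<Sum>l<n. \<Prod>k<m. p k l powr w k)"

definition loss :: "nat \<Rightarrow> nat \<Rightarrow> (nat \<Rightarrow> nat \<Rightarrow> nat \<Rightarrow> real) \<Rightarrow> (nat \<Rightarrow> nat) \<Rightarrow> nat \<Rightarrow> (nat \<Rightarrow> real) \<Rightarrow> real" where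
  "loss m n P J t w = - ln (log_pool m n (P t) w (J t))"

definition grad :: "nat \<Rightarrow> nat \<Rightarrow> (nat \<Rightarrow> nat \<Rightarrow> nat \<Rightarrow> real) \<Rightarrow> (nat \<Rightarrow> nat) \<Rightarrow> nat \<Rightarrow> (nat \<Rightarrow> real) \<Rightarrow> nat \<Rightarrow> real" where
  "grad m n P J t w i =
     (\<Sum>l<n. log_pool m n (P t) w l * ln (P t i l)) - ln (P t i (J t))"

definition eta0 :: "real \<Rightarrow> nat \<Rightarrow> nat \<Rightarrow> nat \<Rightarrow> real" where
  "eta0 \<alpha> m n T = 1 / (sqrt T * ln T) * (1 / (12 * real m powr ((1 + \<alpha>) / 2) * real n))"

definition eta_cand :: "real \<Rightarrow> nat \<Rightarrow> nat \<Rightarrow> nat \<Rightarrow> (nat \<Rightarrow> nat \<Rightarrow> real) \<Rightarrow> nat \<Rightarrow> real" where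
  "eta_cand \<alpha> m n T w t =
     (if eta0 \<alpha> m n T \<le> Min ((\<lambda>i. w t i powr \<alpha>) ` {..<m})
      then eta0 \<alpha> m n T else Min ((\<lambda>i. w t i) ` {..<m}))"

text \<open>\<eta>_t = min(\<eta>_{t-1}, candidate_t) with \<eta>_0 = +\<infinity>, i.e. the minimum of the
  candidates at steps 1..t.\<close>
definition eta_t :: "real \<Rightarrow> nat \<Rightarrow> nat \<Rightarrow> nat \<Rightarrow> (nat \<Rightarrow> nat \<Rightarrow> real) \<Rightarrow> nat \<Rightarrow> real" where
  "eta_t \<alpha> m n T w t = Min (eta_cand \<alpha> m n T w ` {1..t})"

definition alg1_run :: "real \<Rightarrow> nat \<Rightarrow> nat \<Rightarrow> nat \<Rightarrow> (nat \<Rightarrow> nat \<Rightarrow> nat \<Rightarrow> real) \<Rightarrow> (nat \<Rightarrow> nat) \<Rightarrow> (nat \<Rightarrow> nat \<Rightarrow> real) \<Rightarrow> bool" where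
  "alg1_run \<alpha> m n T P J w \<longleftrightarrow>
     (\<forall>t\<in>{1..T}. (\<forall>i<m. (\<forall>j<n. 0 < P t i j) \<and> (\<Sum>j<n. P t i j) = 1) \<and> J t < n) \<and>
     (\<forall>i<m. w 1 i = 1 / real m) \<and>
     (\<forall>t\<in>{1..T}. w t \<in> prob_simplex m \<and> (\<forall>i<m. 0 < w t i)) \<and>
     (\<forall>t\<in>{1..<T}. \<exists>c. \<forall>i<m.
        - (w (t + 1) i powr (\<alpha> - 1)) =
          - (w t i powr (\<alpha> - 1)) - eta_t \<alpha> m n T w t * grad m n P J t (w t) i + c)"

definition small_gradient :: "nat \<Rightarrow> nat \<Rightarrow> nat \<Rightarrow> (nat \<Rightarrow> nat \<Rightarrow> nat \<Rightarrow> real) \<Rightarrow> (nat \<Rightarrow> nat) \<Rightarrow> (nat \<Rightarrow> nat \<Rightarrow> real) \<Rightarrow> bool" where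
  "small_gradient m n T P J w \<longleftrightarrow>
     (\<forall>t\<in>{1..T}. \<forall>i<m.
        - (12 * real n * ln T) / w t i \<le> grad m n P J t (w t) i \<and>
        grad m n P J t (w t) i \<le> 12 * real n * ln T)"

definition regret :: "nat \<Rightarrow> nat \<Rightarrow> nat \<Rightarrow> (nat \<Rightarrow> nat \<Rightarrow> nat \<Rightarrow> real) \<Rightarrow> (nat \<Rightarrow> nat) \<Rightarrow> (nat \<Rightarrow> nat \<Rightarrow> real) \<Rightarrow> real" where
  "regret m n T P J w =
     (\<Sum>t=1..T. loss m n P J t (w t)) -
     (INF u\<in>prob_simplex m. \<Sum>t=1..T. loss m n P J t u)"

end

theory Submission
  imports Defs
begin

text \<open>Algorithm 1 is online mirror descent with the regulariser R(w) = -(1/a) sum_i w_i^a on the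
  loss of the logarithmic pool, which is convex in w because it is a log-sum-exp of a linear
  function of w. In the mirror coordinates x_i = w_i^(a-1) a step reads x_i' = x_i + eta g_i - c.
  The small gradient assumption bounds the normalising constant c from both sides, so each x_i
  grows by at most a drift D of order m^((1-a)/2) / sqrt T per step. For large T the coordinates
  therefore stay in the region where min_i w_i^a >= eta: the learning rate stays eta, and every
  step changes each w_i by a ratio of at most 11/10. The three-point identity of the Bregman
  divergence then bounds the regret of a step by a telescoping Bregman term, a telescoping
  multiple of sum_i ln w_i, and O(D^2); summing over the T steps gives the bound.\<close>

section \<open>Inequalities for real powers\<close>

lemma powr_ge_tangent_at_one:
  fixes p y :: real
  assumes "0 < y" and "0 \<le> p * (p - 1)"
  shows "1 + p * (y - 1) \<le> y powr p"
proof -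
  have "p * 1 powr (p - 1) * (y - 1) \<le> y powr p - 1 powr p"
  proof (rule f''_imp_f'[where C="{0<..}" and f="\<lambda>y. y powr p" and f'="\<lambda>y. p * y powr (p - 1)"
        and f''="\<lambda>y. p * ((p - 1) * y powr (p - 1 - 1))"])
    show "\<And>x. x \<in> {0<..} \<Longrightarrow> 0 \<le> p * ((p - 1) * x powr (p - 1 - 1))"
      using assms(2) by (metis mult.assoc mult_nonneg_nonneg powr_ge_zero)
  qed (use assms in \<open>auto intro!: derivative_eq_intros\<close>)
  then show ?thesis by simp
qed

lemma powr_le_tangent_at_one:
  fixes p y :: real
  assumes "0 \<le> y" and "0 \<le> p" "p \<le> 1"
  shows "y powr p \<le> 1 + p * (y - 1)"
proof (cases "y = 0")
  case False
  have "(-p) * 1 powr (p - 1) * (y - 1) \<le> - (y powr p) - - (1 powr p)"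
  proof (rule f''_imp_f'[where C="{0<..}" and f="\<lambda>y. - (y powr p)" and f'="\<lambda>y. -p * y powr (p - 1)"
        and f''="\<lambda>y. -p * ((p - 1) * y powr (p - 1 - 1))"])
    show "\<And>x. x \<in> {0<..} \<Longrightarrow> 0 \<le> -p * ((p - 1) * x powr (p - 1 - 1))"
      using assms by (simp add: mult_nonneg_nonpos mult_nonpos_nonneg)
  qed (use assms False in \<open>auto intro!: derivative_eq_intros\<close>)
  then show ?thesis by simp
qed (use assms in simp)

lemma minus_one_le_mult_ln:
  fixes y :: real
  assumes "0 < y"
  shows "y - 1 \<le> y * ln y"
proof -
  have "- ln y \<le> 1 / y - 1"
    using ln_le_minus_one[of "1 / y"] assms by (simp add: ln_div)
  then have "y * (- ln y) \<le> y * (1 / y - 1)"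
    using assms by (intro mult_left_mono) auto
  moreover have "y * (1 / y - 1) = 1 - y"
    using assms by (simp add: field_simps)
  ultimately show ?thesis
    by simp
qed

lemma sum_powr_le_card_powr:
  fixes w :: "'a \<Rightarrow> real"
  assumes "finite A" and "\<forall>i\<in>A. 0 \<le> w i" and "sum w A = 1" and "0 \<le> q" "q \<le> 1"
  shows "(\<Sum>i\<in>A. w i powr q) \<le> real (card A) powr (1 - q)"
proof -
  define k where "k = real (card A)"
  have k: "0 < k"
    using assms(1,3) by (auto simp: k_def card_gt_0_iff)
  have "w i powr q \<le> (1 + q * (k * w i - 1)) / k powr q" if "i \<in> A" for i
  proof -
    have "(k * w i) powr q \<le> 1 + q * (k * w i - 1)"
      using assms k that by (intro powr_le_tangent_at_one) auto
    then show ?thesis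
      using assms k that by (simp add: powr_mult field_simps)
  qed
  then have "(\<Sum>i\<in>A. w i powr q) \<le> (\<Sum>i\<in>A. 1 + q * (k * w i - 1)) / k powr q"
    by (auto simp: sum_divide_distrib intro: sum_mono)
  also have "(\<Sum>i\<in>A. 1 + q * (k * w i - 1)) = k"
    using assms by (simp add: sum.distrib sum_subtractf k_def flip: sum_distrib_left)
  also have "k / k powr q = k powr (1 - q)"
    using k by (simp add: powr_diff)
  finally show ?thesis
    by (simp add: k_def)
qed

lemma card_powr_le_sum_powr:
  fixes w :: "'a \<Rightarrow> real"
  assumes "finite A" and "\<forall>i\<in>A. 0 < w i" and "sum w A = 1" and "1 \<le> q"
  shows "real (card A) powr (1 - q) \<le> (\<Sum>i\<in>A. w i powr q)"
proof -
  define k where "k = real (card A)"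
  have k: "0 < k"
    using assms(1,3) by (auto simp: k_def card_gt_0_iff)
  have "(1 + q * (k * w i - 1)) / k powr q \<le> w i powr q" if "i \<in> A" for i
  proof -
    have "1 + q * (k * w i - 1) \<le> (k * w i) powr q"
      using assms k that by (intro powr_ge_tangent_at_one) auto
    then show ?thesis
      using assms k that by (simp add: powr_mult field_simps)
  qed
  then have "(\<Sum>i\<in>A. 1 + q * (k * w i - 1)) / k powr q \<le> (\<Sum>i\<in>A. w i powr q)"
    by (auto simp: sum_divide_distrib intro: sum_mono)
  moreover have "(\<Sum>i\<in>A. 1 + q * (k * w i - 1)) = k"
    using assms by (simp add: sum.distrib sum_subtractf k_def flip: sum_distrib_left)
  moreover have "k / k powr q = k powr (1 - q)"
    using k by (simp add: powr_diff)
  ultimately show ?thesis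
    by (simp add: k_def)
qed

lemma powr_powr_reciprocal:
  fixes w a :: real
  assumes "0 < w" and "a \<noteq> 0"
  shows "(w powr a) powr (1 / a) = w"
  using assms by (simp add: powr_powr)

lemma diff_le_mirror_diff:
  fixes a w w' :: real
  assumes "0 < w" "0 < w'" "a < 1"
  shows "w - w' \<le> w * (w' powr (a-1) - w powr (a-1)) / ((1-a) * w powr (a-1))"
proof -
  define x x' where "x = w powr (a-1)" and "x' = w' powr (a-1)"
  have x: "0 < x" "0 < x'"
    using assms by (auto simp: x_def x'_def)
  have "1 + (1/(a-1)) * (x'/x - 1) \<le> (x'/x) powr (1/(a-1))"
    using assms x by (intro powr_ge_tangent_at_one mult_nonpos_nonpos) (auto simp: divide_le_0_iff)
  also have "(x'/x) powr (1/(a-1)) = w'/w"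
    using assms by (simp add: x_def x'_def powr_divide powr_powr_reciprocal)
  finally have "w * (1 + (1/(a-1)) * (x'/x - 1)) \<le> w'"
    using assms by (simp add: field_simps)
  moreover have "w * (1 + (1/(a-1)) * (x'/x - 1)) = w - w * (x' - x) / ((1-a) * x)"
    using assms x by (simp add: field_simps)
  ultimately show ?thesis
    by (simp add: x_def x'_def)
qed

lemma mirror_diff_mult_powr_le:
  fixes a w w' :: real
  assumes "0 < w" "0 < w'" "a < 1"
  shows "(w' powr (a-1) - w powr (a-1)) * w' powr (2-a) \<le> (1-a) * (w - w')"
proof -
  have "(1-a) * (w' - w) \<le> (1-a) * (w' * (w powr (a-1) - w' powr (a-1)) / ((1-a) * w' powr (a-1)))"
    using diff_le_mirror_diff[of w' w a] assms by (intro mult_left_mono) auto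
  also have "\<dots> = - ((w' powr (a-1) - w powr (a-1)) * (w' / w' powr (a-1)))"
    using assms by (simp add: field_simps)
  also have "w' / w' powr (a-1) = w' powr (2-a)"
    using assms powr_diff[of w' 1 "a-1"] by force
  finally show ?thesis
    by (simp add: algebra_simps)
qed

lemma ln_diff_le_mirror_diff:
  fixes a w w' :: real
  assumes "0 < w" "0 < w'" "a < 1"
  shows "ln w - ln w' \<le> (w' powr (a-1) - w powr (a-1)) / ((1-a) * w powr (a-1))"
proof -
  define x x' where "x = w powr (a-1)" and "x' = w' powr (a-1)"
  have x: "0 < x" "0 < x'"
    using assms by (auto simp: x_def x'_def)
  have "ln (x'/x) \<le> x'/x - 1"
    using x by (intro ln_le_minus_one) simp
  moreover have "ln (x'/x) = (1-a) * (ln w - ln w')"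
    using assms x by (simp add: x_def x'_def ln_div ln_powr algebra_simps)
  ultimately have "(1-a) * (ln w - ln w') \<le> (x' - x) / x"
    using x by (simp add: diff_divide_distrib)
  then show ?thesis
    using assms x by (simp add: x_def[symmetric] x'_def[symmetric] field_simps)
qed

lemma ratio_le_of_mirror_ge:
  fixes a w w' :: real
  assumes "0 < w" "0 < w'" "0 < a" "a < 1/2"
    and "(29/30) * w powr (a-1) \<le> w' powr (a-1)"
  shows "w' / w \<le> 11/10"
proof -
  define x x' where "x = w powr (a-1)" and "x' = w' powr (a-1)"
  have x: "0 < x" "0 < x'"
    using assms by (auto simp: x_def x'_def)
  have "w' / w = (x'/x) powr (1/(a-1))"
    using assms by (simp add: x_def x'_def powr_divide powr_powr_reciprocal)
  also have "\<dots> \<le> (29/30) powr (1/(a-1))"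
    using assms x by (intro powr_mono2') (auto simp: x_def x'_def field_simps)
  also have "\<dots> = (30/29) powr (1/(1-a))"
  proof -
    have "1/(a-1) = - (1/(1-a))"
      using assms by (simp add: field_simps)
    then show ?thesis
      by (simp only: powr_minus inverse_powr[symmetric]) simp
  qed
  also have "\<dots> \<le> (30/29) powr (2::real)"
    using assms by (intro powr_mono) (auto simp: field_simps)
  also have "\<dots> \<le> 11/10"
    by (simp add: powr_numeral power2_eq_square)
  finally show ?thesis .
qed

section \<open>Convexity of the pooled loss\<close>

lemma ln_sum_exp_ge_tangent:
  fixes z z' :: "'a \<Rightarrow> real"
  assumes "finite L" and "L \<noteq> {}"
  shows "ln (\<Sum>l\<in>L. exp (z l)) + (\<Sum>l\<in>L. exp (z l) / (\<Sum>k\<in>L. exp (z k)) * (z' l - z l))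
           \<le> ln (\<Sum>l\<in>L. exp (z' l))"
proof -
  define S where "S = (\<Sum>k\<in>L. exp (z k))"
  define q where "q l = exp (z l) / S" for l
  define d where "d l = z' l - z l" for l
  define \<mu> where "\<mu> = (\<Sum>l\<in>L. q l * d l)"
  have S: "0 < S"
    using assms by (simp add: S_def sum_pos)
  have q: "0 \<le> q l" for l
    using S by (simp add: q_def)
  have q_sum: "(\<Sum>l\<in>L. q l) = 1"
    using S by (simp add: q_def S_def flip: sum_divide_distrib)
  \<comment> \<open>Jensen for exp, from the tangent line of exp at \<mu>\<close>
  have "exp \<mu> * (1 + (d l - \<mu>)) \<le> exp (d l)" for l
  proof -
    have "exp \<mu> * (1 + (d l - \<mu>)) \<le> exp \<mu> * exp (d l - \<mu>)"
      by (intro mult_left_mono exp_ge_add_one_self) auto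
    then show ?thesis
      by (simp flip: exp_add)
  qed
  then have "(\<Sum>l\<in>L. q l * (exp \<mu> * (1 + (d l - \<mu>)))) \<le> (\<Sum>l\<in>L. q l * exp (d l))"
    by (intro sum_mono mult_left_mono q)
  moreover have "(\<Sum>l\<in>L. q l * (exp \<mu> * (1 + (d l - \<mu>))))
      = exp \<mu> * ((\<Sum>l\<in>L. q l) + (\<Sum>l\<in>L. q l * d l) - \<mu> * (\<Sum>l\<in>L. q l))"
    by (simp add: sum_distrib_left sum_distrib_right sum.distrib sum_subtractf algebra_simps)
  ultimately have "exp \<mu> \<le> (\<Sum>l\<in>L. q l * exp (d l))"
    using q_sum by (simp add: \<mu>_def)
  then have "S * exp \<mu> \<le> S * (\<Sum>l\<in>L. q l * exp (d l))"
    using S by simp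
  also have "\<dots> = (\<Sum>l\<in>L. exp (z' l))"
    using S by (simp add: q_def d_def sum_distrib_left exp_diff)
  finally have "ln (S * exp \<mu>) \<le> ln (\<Sum>l\<in>L. exp (z' l))"
    using S by (intro ln_mono) auto
  then have "ln S + \<mu> \<le> ln (\<Sum>l\<in>L. exp (z' l))"
    using S by (simp add: ln_mult)
  then show ?thesis
    by (simp add: S_def q_def d_def \<mu>_def)
qed

lemma ln_sum_exp_le_mean_add_card:
  fixes z :: "'a \<Rightarrow> real"
  assumes "finite L" and "L \<noteq> {}"
  shows "ln (\<Sum>l\<in>L. exp (z l)) \<le> (\<Sum>l\<in>L. exp (z l) / (\<Sum>k\<in>L. exp (z k)) * z l) + card L"
proof -
  define S where "S = (\<Sum>k\<in>L. exp (z k))"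
  define q where "q l = exp (z l) / S" for l
  have S: "0 < S"
    using assms by (simp add: S_def sum_pos)
  have q: "0 < q l" for l
    using S by (simp add: q_def)
  have q_sum: "(\<Sum>l\<in>L. q l) = 1"
    using S by (simp add: q_def S_def flip: sum_divide_distrib)
  have entropy_term: "- (q l * ln (q l)) \<le> 1" for l
    using minus_one_le_mult_ln[of "q l"] q[of l] by linarith
  have "q l * z l + - (q l * ln (q l)) = q l * ln S" if "l \<in> L" for l
    using S by (simp add: q_def ln_div diff_divide_distrib algebra_simps)
  then have "(\<Sum>l\<in>L. q l * z l + - (q l * ln (q l))) = ln S"
    using q_sum by (simp flip: sum_distrib_right)
  then have "ln S = (\<Sum>l\<in>L. q l * z l) + (\<Sum>l\<in>L. - (q l * ln (q l)))"
    by (simp only: sum.distrib)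
  also have "\<dots> \<le> (\<Sum>l\<in>L. q l * z l) + card L"
    using sum_mono[of L "\<lambda>l. - (q l * ln (q l))" "\<lambda>_. 1"] entropy_term by simp
  finally show ?thesis
    by (simp add: S_def q_def)
qed

definition pool_logit :: "nat \<Rightarrow> (nat \<Rightarrow> nat \<Rightarrow> real) \<Rightarrow> (nat \<Rightarrow> real) \<Rightarrow> nat \<Rightarrow> real" where
  "pool_logit m p w l = (\<Sum>i<m. w i * ln (p i l))"

lemma log_pool_eq_softmax:
  assumes "\<forall>i<m. \<forall>j<n. 0 < p i j" and "l < n"
  shows "log_pool m n p w l = exp (pool_logit m p w l) / (\<Sum>k<n. exp (pool_logit m p w k))"
proof -
  have "(\<Prod>i<m. p i k powr w i) = (\<Prod>i<m. exp (w i * ln (p i k)))" if "k < n" for k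
    using assms that by (intro prod.cong refl) (simp add: powr_def less_imp_neq[symmetric])
  then have "(\<Prod>i<m. p i k powr w i) = exp (pool_logit m p w k)" if "k < n" for k
    using that by (simp add: pool_logit_def exp_sum)
  then show ?thesis
    using assms by (simp add: log_pool_def)
qed

context
  fixes m n t :: nat and P :: "nat \<Rightarrow> nat \<Rightarrow> nat \<Rightarrow> real" and J :: "nat \<Rightarrow> nat"
  assumes P_pos: "\<forall>i<m. \<forall>j<n. 0 < P t i j" and J_less: "J t < n"
begin

lemma loss_eq_ln_sum_exp:
  "loss m n P J t w = ln (\<Sum>l<n. exp (pool_logit m (P t) w l)) - pool_logit m (P t) w (J t)"
proof -
  have "0 < (\<Sum>l<n. exp (pool_logit m (P t) w l))"
    using J_less by (intro sum_pos) auto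
  then show ?thesis
    using P_pos J_less by (simp add: loss_def log_pool_eq_softmax ln_div)
qed

lemma sum_mult_grad:
  "(\<Sum>i<m. c i * grad m n P J t w i)
     = (\<Sum>l<n. log_pool m n (P t) w l * pool_logit m (P t) c l) - pool_logit m (P t) c (J t)"
  by (simp add: grad_def pool_logit_def sum_distrib_left sum_subtractf algebra_simps
      sum.swap[of _ "{..<n}"])

lemma loss_ge_tangent:
  "loss m n P J t w + (\<Sum>i<m. grad m n P J t w i * (u i - w i)) \<le> loss m n P J t u"
proof -
  have "pool_logit m (P t) (\<lambda>i. u i - w i) l = pool_logit m (P t) u l - pool_logit m (P t) w l" for l
    by (simp add: pool_logit_def sum_subtractf left_diff_distrib)
  then have "(\<Sum>i<m. grad m n P J t w i * (u i - w i))
      = (\<Sum>l<n. log_pool m n (P t) w l * (pool_logit m (P t) u l - pool_logit m (P t) w l))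
        - (pool_logit m (P t) u (J t) - pool_logit m (P t) w (J t))"
    using sum_mult_grad[of "\<lambda>i. u i - w i" w] by (simp add: mult.commute)
  moreover have "{..<n} \<noteq> {}"
    using J_less by auto
  ultimately show ?thesis
    using ln_sum_exp_ge_tangent[of "{..<n}" "pool_logit m (P t) w" "pool_logit m (P t) u"]
    by (simp add: loss_eq_ln_sum_exp log_pool_eq_softmax[OF P_pos])
qed

lemma loss_le_sum_mult_grad:
  "loss m n P J t w \<le> (\<Sum>i<m. w i * grad m n P J t w i) + n"
proof -
  have "{..<n} \<noteq> {}"
    using J_less by auto
  then show ?thesis
    using ln_sum_exp_le_mean_add_card[of "{..<n}" "pool_logit m (P t) w"]
    by (simp add: loss_eq_ln_sum_exp sum_mult_grad log_pool_eq_softmax[OF P_pos])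
qed

lemma loss_nonneg: "0 \<le> loss m n P J t u"
proof -
  have "exp (pool_logit m (P t) u (J t)) \<le> (\<Sum>l<n. exp (pool_logit m (P t) u l))"
    using J_less by (intro member_le_sum) auto
  then have "pool_logit m (P t) u (J t) \<le> ln (\<Sum>l<n. exp (pool_logit m (P t) u l))"
    by (metis exp_gt_zero exp_le_cancel_iff exp_ln order_less_le_trans)
  then show ?thesis
    by (simp add: loss_eq_ln_sum_exp)
qed

end

section \<open>One step of Tsallis mirror descent\<close>

text \<open>The Bregman divergence of the one-dimensional regulariser \<open>x \<mapsto> - x powr a / a\<close>;
  the divergence of \<open>R\<close> is its sum over the coordinates.\<close>

definition bregman_tsallis :: "real \<Rightarrow> real \<Rightarrow> real \<Rightarrow> real" where
  "bregman_tsallis a u w = - (u powr a) / a + (w powr a) / a + (w powr (a - 1)) * (u - w)"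

lemma bregman_tsallis_nonneg:
  fixes a u w :: real
  assumes "0 < a" "a < 1" "0 \<le> u" "0 < w"
  shows "0 \<le> bregman_tsallis a u w"
proof -
  have "(u/w) powr a \<le> 1 + a * (u/w - 1)"
    using assms by (intro powr_le_tangent_at_one) auto
  moreover have "w powr a = w * w powr (a - 1)"
    using assms by (simp add: powr_mult_base)
  ultimately have "u powr a \<le> w * w powr (a - 1) + a * w powr (a - 1) * (u - w)"
    using assms by (simp add: powr_divide field_simps)
  then show ?thesis
    using assms \<open>w powr a = _\<close> by (simp add: bregman_tsallis_def field_simps)
qed

lemma bregman_tsallis_three_point:
  fixes a u w w' :: real
  assumes "0 < a" "a < 1" "0 < w" "0 < w'"
  shows "(w' powr (a-1) - w powr (a-1)) * (w' - u)
           \<le> bregman_tsallis a u w - bregman_tsallis a u w'"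
proof -
  have "bregman_tsallis a u w - bregman_tsallis a u w' - (w' powr (a-1) - w powr (a-1)) * (w' - u)
          = bregman_tsallis a w' w"
    by (simp add: bregman_tsallis_def algebra_simps)
  then show ?thesis
    using bregman_tsallis_nonneg[of a w' w] assms by linarith
qed

lemma one_le_powr_of_le_one:
  fixes a w :: real
  assumes "0 < w" "w \<le> 1" "a < 1"
  shows "1 \<le> w powr (a - 1)"
  using powr_mono2'[of "a - 1" w 1] assms by simp

lemma stability_of_mirror_increase:
  fixes a D w w' :: real
  assumes a: "0 < a" "a < 1" and w: "0 < w" "w \<le> 1" and w': "0 < w'"
    and up: "0 \<le> w' powr (a-1) - w powr (a-1)" "w' powr (a-1) - w powr (a-1) \<le> D"
  shows "(w' powr (a-1) - w powr (a-1)) * (w - w') \<le> D^2 * w / (1-a)"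
    and "ln w - ln w' \<le> D * w powr (1-a) / (1-a)"
proof -
  define x \<delta> where "x = w powr (a-1)" and "\<delta> = w' powr (a-1) - w powr (a-1)"
  have x: "1 \<le> x"
    using a w by (simp add: x_def one_le_powr_of_le_one)
  have "\<delta> * (w - w') \<le> \<delta> * (w * \<delta> / ((1-a) * x))"
    using diff_le_mirror_diff[of w w' a] a w w' up by (intro mult_left_mono) (auto simp: x_def \<delta>_def)
  also have "\<dots> = w * \<delta>^2 / ((1-a) * x)"
    by (simp add: power2_eq_square)
  also have "\<dots> \<le> w * \<delta>^2 / ((1-a) * 1)"
    using x a w by (intro divide_left_mono mult_left_mono) auto
  also have "\<dots> \<le> w * D^2 / (1-a)"
    using up a w by (auto simp: \<delta>_def intro!: divide_right_mono mult_left_mono power_mono)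
  finally show "(w' powr (a-1) - w powr (a-1)) * (w - w') \<le> D^2 * w / (1-a)"
    by (simp add: \<delta>_def mult.commute)
  have "ln w - ln w' \<le> \<delta> / ((1-a) * x)"
    using ln_diff_le_mirror_diff[of w w' a] a w w' by (simp add: x_def \<delta>_def)
  also have "\<dots> \<le> D / ((1-a) * x)"
    using up a x by (intro divide_right_mono) (auto simp: \<delta>_def)
  also have "\<dots> = D * (1 / x) / (1-a)"
    by simp
  also have "1 / x = w powr (1-a)"
    using w by (simp add: x_def flip: powr_minus_divide)
  finally show "ln w - ln w' \<le> D * w powr (1-a) / (1-a)" .
qed

lemma stability_of_mirror_decrease:
  fixes a \<epsilon> w w' :: real
  assumes a: "0 < a" "a < 1/2" and w: "0 < w" "w \<le> 1" and w': "0 < w'" and \<epsilon>: "0 \<le> \<epsilon>"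
    and down: "w' powr (a-1) - w powr (a-1) < 0" "- (\<epsilon> * (1 + 1/w)) \<le> w' powr (a-1) - w powr (a-1)"
    and ratio: "(29/30) * w powr (a-1) \<le> w' powr (a-1)"
  shows "(w' powr (a-1) - w powr (a-1)) * (w - w') \<le> (11/5) * \<epsilon> * (ln w' - ln w)"
proof -
  define \<delta> y where "\<delta> = w' powr (a-1) - w powr (a-1)" and "y = w' / w"
  have "w * \<delta> / ((1-a) * w powr (a-1)) < 0"
    using down a w by (intro divide_neg_pos mult_pos_neg) (auto simp: \<delta>_def)
  then have "w \<le> w'"
    using diff_le_mirror_diff[of w w' a] a w w' by (simp add: \<delta>_def)
  then have y: "1 \<le> y" "y \<le> 11/10"
    using w ratio_le_of_mirror_ge[of w w' a] a w' ratio by (simp_all add: y_def)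
  have "\<epsilon> * (1 + 1/w) \<le> \<epsilon> * (2/w)"
    using w \<epsilon> by (intro mult_left_mono) (auto simp: field_simps)
  moreover have "- \<delta> \<le> \<epsilon> * (1 + 1/w)"
    using down unfolding \<delta>_def by (metis minus_le_iff)
  ultimately have "- \<delta> \<le> \<epsilon> * (2/w)"
    by linarith
  then have "\<delta> * (w - w') \<le> \<epsilon> * (2/w) * (w' - w)"
    using \<open>w \<le> w'\<close> mult_right_mono[of "- \<delta>" "\<epsilon> * (2/w)" "w' - w"] by (simp add: algebra_simps)
  also have "\<dots> = 2 * \<epsilon> * (y - 1)"
    using w by (simp add: y_def field_simps)
  also have "\<dots> \<le> 2 * \<epsilon> * ((11/10) * ln y)"
    using minus_one_le_mult_ln[of y] mult_right_mono[of y "11/10" "ln y"] y \<epsilon>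
    by (intro mult_left_mono) auto
  also have "\<dots> = (11/5) * \<epsilon> * (ln w' - ln w)"
    using w w' by (simp add: y_def ln_div)
  finally show ?thesis
    by (simp add: \<delta>_def)
qed

text \<open>The stability term of the three-point decomposition of one step.\<close>

lemma mirror_step_stability:
  fixes a \<epsilon> D w w' :: real
  assumes a: "0 < a" "a < 1/2" and w: "0 < w" "w \<le> 1" and w': "0 < w'"
    and \<epsilon>: "0 \<le> \<epsilon>" and D: "0 \<le> D"
    and up: "w' powr (a-1) - w powr (a-1) \<le> D"
    and down: "- (\<epsilon> * (1 + 1/w)) \<le> w' powr (a-1) - w powr (a-1)"
    and ratio: "(29/30) * w powr (a-1) \<le> w' powr (a-1)"
  shows "(w' powr (a-1) - w powr (a-1)) * (w - w')
           \<le> D^2 * w / (1-a) + (11/5) * \<epsilon> * (ln w' - ln w) + (11/5) * \<epsilon> * D * w powr (1-a) / (1-a)"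
proof (cases "0 \<le> w' powr (a-1) - w powr (a-1)")
  case True
  have "a < 1"
    using a by simp
  note increase = stability_of_mirror_increase[OF a(1) this w w' True up]
  have "0 \<le> (11/5) * \<epsilon> * ((ln w' - ln w) + D * w powr (1-a) / (1-a))"
    using increase(2) a \<epsilon> by simp
  then show ?thesis
    using increase(1) a by (simp only: distrib_left mult.assoc times_divide_eq_right)
next
  case False
  have "0 \<le> D^2 * w / (1-a)" "0 \<le> (11/5) * \<epsilon> * D * w powr (1-a) / (1-a)"
    using a w \<epsilon> D by simp_all
  then show ?thesis
    using stability_of_mirror_decrease[OF a w w' \<epsilon> _ down ratio] False by linarith
qed

text \<open>One step of Algorithm 1 in the mirror coordinates \<open>x\<^sub>i = w\<^sub>i powr (a-1)\<close>:
  \<open>x'\<^sub>i = x\<^sub>i + h\<^sub>i - c\<close> with \<open>h = \<eta>\<^sub>t \<nabla>L\<^sup>t\<close> and \<open>\<epsilon> = \<eta>\<^sub>t \<gamma>\<close>, so that the small gradient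
  assumption becomes \<open>-\<epsilon>/w\<^sub>i \<le> h\<^sub>i \<le> \<epsilon>\<close>.\<close>

locale tsallis_step =
  fixes a \<epsilon> c :: real and m :: nat and w w' h :: "nat \<Rightarrow> real"
  assumes a: "0 < a" "a < 1/2"
    and w_pos: "\<forall>i<m. 0 < w i" and w_sum: "(\<Sum>i<m. w i) = 1"
    and w'_pos: "\<forall>i<m. 0 < w' i" and w'_sum: "(\<Sum>i<m. w' i) = 1"
    and \<epsilon>: "0 < \<epsilon>"
    and h_bounds: "\<forall>i<m. - \<epsilon> / w i \<le> h i \<and> h i \<le> \<epsilon>"
    and update: "\<forall>i<m. w' i powr (a-1) = w i powr (a-1) + h i - c"
    and regular: "\<forall>i<m. \<epsilon> * (1 + 1 / w i) \<le> (1/30) * w i powr (a-1)"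
begin

lemma m_pos: "0 < m"
  using w_sum by (cases m) auto

lemma w_le_1: "i < m \<Longrightarrow> w i \<le> 1"
  using member_le_sum[of i "{..<m}" w] w_pos w_sum by (simp add: less_imp_le)

lemma mirror_diff: "i < m \<Longrightarrow> w' i powr (a-1) - w i powr (a-1) = h i - c"
  using update by simp

lemma shift_le: "c \<le> \<epsilon>"
proof (rule ccontr)
  assume "\<not> c \<le> \<epsilon>"
  have "w i - w' i < 0" if i: "i < m" for i
  proof -
    have "w' i powr (a-1) - w i powr (a-1) < 0"
      using mirror_diff h_bounds i \<open>\<not> c \<le> \<epsilon>\<close> by force
    then have "w i * (w' i powr (a-1) - w i powr (a-1)) / ((1-a) * w i powr (a-1)) < 0"
      using w_pos a i by (intro divide_neg_pos mult_pos_neg) auto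
    then show ?thesis
      using diff_le_mirror_diff[of "w i" "w' i" a] w_pos w'_pos i a by simp
  qed
  then have "(\<Sum>i<m. w i - w' i) < (\<Sum>i<m. 0)"
    using m_pos by (intro sum_strict_mono) auto
  then show False
    using w_sum w'_sum by (simp add: sum_subtractf)
qed

lemma mirror_ratio: "i < m \<Longrightarrow> (29/30) * w i powr (a-1) \<le> w' i powr (a-1)"
proof -
  assume i: "i < m"
  have "- (\<epsilon> / w i) - \<epsilon> \<le> h i - c"
    using h_bounds shift_le i by fastforce
  then have "- (\<epsilon> * (1 + 1 / w i)) \<le> w' i powr (a-1) - w i powr (a-1)"
    using mirror_diff[OF i] by (simp add: algebra_simps)
  then show ?thesis
    using regular i by force
qed

lemma sum_ratio_powr_le: "(\<Sum>i<m. w' i powr (2-a) / w i) \<le> (11/10) * real m powr a"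
proof -
  have "w' i powr (2-a) / w i \<le> (11/10) * w' i powr (1-a)" if i: "i < m" for i
  proof -
    have "w' i powr (2-a) / w i = (w' i / w i) * w' i powr (1-a)"
      using w'_pos i powr_mult_base[of "w' i" "1-a"] by force
    also have "\<dots> \<le> (11/10) * w' i powr (1-a)"
      using ratio_le_of_mirror_ge[of "w i" "w' i" a] mirror_ratio[OF i] w_pos w'_pos a i
      by (intro mult_right_mono) auto
    finally show ?thesis .
  qed
  then have "(\<Sum>i<m. w' i powr (2-a) / w i) \<le> (11/10) * (\<Sum>i<m. w' i powr (1-a))"
    unfolding sum_distrib_left by (intro sum_mono) auto
  also have "\<dots> \<le> (11/10) * real m powr a"
    using sum_powr_le_card_powr[of "{..<m}" w' "1-a"] w'_pos w'_sum a by (simp add: less_imp_le)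
  finally show ?thesis .
qed

lemma shift_ge: "- ((11/10) * m * \<epsilon>) \<le> c"
proof (cases "0 \<le> c")
  case True
  moreover have "0 \<le> (11/10) * m * \<epsilon>"
    using \<epsilon> by simp
  ultimately show ?thesis
    by linarith
next
  case False
  \<comment> \<open>the coordinates move by a total of zero, and each movement is controlled at \<open>w'\<close>\<close>
  have "w' i powr (2-a) * (- \<epsilon> / w i - c) \<le> (1-a) * (w i - w' i)" if i: "i < m" for i
  proof -
    have "- \<epsilon> / w i - c \<le> w' i powr (a-1) - w i powr (a-1)"
      using mirror_diff h_bounds i by force
    then have "w' i powr (2-a) * (- \<epsilon> / w i - c)
        \<le> (w' i powr (a-1) - w i powr (a-1)) * w' i powr (2-a)"
      by (subst mult.commute) (intro mult_right_mono, auto)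
    also have "\<dots> \<le> (1-a) * (w i - w' i)"
      using mirror_diff_mult_powr_le w_pos w'_pos a i by simp
    finally show ?thesis .
  qed
  then have "(\<Sum>i<m. w' i powr (2-a) * (- \<epsilon> / w i - c)) \<le> (1-a) * (\<Sum>i<m. w i - w' i)"
    unfolding sum_distrib_left by (intro sum_mono) auto
  also have "\<dots> = 0"
    using w_sum w'_sum by (simp add: sum_subtractf)
  finally have "(- c) * (\<Sum>i<m. w' i powr (2-a)) \<le> \<epsilon> * (\<Sum>i<m. w' i powr (2-a) / w i)"
    by (simp add: algebra_simps sum_subtractf sum_distrib_left sum_distrib_right sum_negf)
  moreover have "(- c) * real m powr (a-1) \<le> (- c) * (\<Sum>i<m. w' i powr (2-a))"
    using card_powr_le_sum_powr[of "{..<m}" w' "2-a"] w'_pos w'_sum a False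
    by (intro mult_left_mono) auto
  moreover have "\<epsilon> * (\<Sum>i<m. w' i powr (2-a) / w i) \<le> ((11/10) * m * \<epsilon>) * real m powr (a-1)"
    using sum_ratio_powr_le powr_mult_base[of "real m" "a-1"] m_pos \<epsilon> by (simp add: mult_left_mono)
  ultimately have "(- c) * real m powr (a-1) \<le> ((11/10) * m * \<epsilon>) * real m powr (a-1)"
    by linarith
  then have "- c \<le> (11/10) * m * \<epsilon>"
    by (rule mult_right_le_imp_le) (use m_pos in simp)
  then show ?thesis
    by simp
qed

lemma mirror_growth: "i < m \<Longrightarrow> w' i powr (a-1) \<le> w i powr (a-1) + \<epsilon> * (1 + (11/10) * m)"
  using mirror_diff[of i] h_bounds shift_ge by (force simp: algebra_simps)

lemma coordinate_inner_le:
  assumes i: "i < m"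
  defines "D \<equiv> \<epsilon> * (1 + (11/10) * m)"
  shows "(h i - c) * (w i - u) \<le> (bregman_tsallis a u (w i) - bregman_tsallis a u (w' i))
           + (D^2 / (1-a) * w i + (11/5) * \<epsilon> * (ln (w' i) - ln (w i))
              + (11/5) * \<epsilon> * D / (1-a) * w i powr (1-a))"
proof -
  have "(h i - c) * (w' i - u) \<le> bregman_tsallis a u (w i) - bregman_tsallis a u (w' i)"
    using bregman_tsallis_three_point[of a "w i" "w' i" u] a w_pos w'_pos i mirror_diff[OF i] by simp
  moreover have "(h i - c) * (w i - w' i) \<le> D^2 * w i / (1-a) + (11/5) * \<epsilon> * (ln (w' i) - ln (w i))
      + (11/5) * \<epsilon> * D * w i powr (1-a) / (1-a)"
  proof (unfold mirror_diff[OF i, symmetric], rule mirror_step_stability)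
    show "w' i powr (a-1) - w i powr (a-1) \<le> D"
      using mirror_growth[OF i] by (simp add: D_def)
    show "- (\<epsilon> * (1 + 1 / w i)) \<le> w' i powr (a-1) - w i powr (a-1)"
      using mirror_diff[OF i] h_bounds shift_le i by (force simp: algebra_simps)
  qed (use a w_pos w'_pos w_le_1 mirror_ratio \<epsilon> i in \<open>auto simp: D_def\<close>)
  ultimately show ?thesis
    by (simp add: algebra_simps)
qed

lemma inner_le_bregman_diff:
  assumes u: "\<forall>i<m. 0 \<le> u i" "(\<Sum>i<m. u i) = 1"
  defines "D \<equiv> \<epsilon> * (1 + (11/10) * m)"
  shows "(\<Sum>i<m. h i * (w i - u i))
           \<le> (\<Sum>i<m. bregman_tsallis a (u i) (w i)) - (\<Sum>i<m. bregman_tsallis a (u i) (w' i))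
             + D^2 / (1-a) + (11/5) * \<epsilon> * (\<Sum>i<m. ln (w' i) - ln (w i))
             + (11/5) * \<epsilon> * D * real m powr a / (1-a)"
proof -
  have "(\<Sum>i<m. h i * (w i - u i)) = (\<Sum>i<m. (h i - c) * (w i - u i)) + c * (\<Sum>i<m. w i - u i)"
    by (simp add: sum_distrib_left flip: sum.distrib) (simp add: algebra_simps)
  moreover have "(\<Sum>i<m. w i - u i) = 0"
    using w_sum u by (simp add: sum_subtractf)
  ultimately have "(\<Sum>i<m. h i * (w i - u i)) = (\<Sum>i<m. (h i - c) * (w i - u i))"
    by simp
  also have "\<dots> \<le> (\<Sum>i<m. (bregman_tsallis a (u i) (w i) - bregman_tsallis a (u i) (w' i))
        + (D^2 / (1-a) * w i + (11/5) * \<epsilon> * (ln (w' i) - ln (w i))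
           + (11/5) * \<epsilon> * D / (1-a) * w i powr (1-a)))"
    using coordinate_inner_le by (intro sum_mono) (simp add: D_def)
  also have "\<dots> = (\<Sum>i<m. bregman_tsallis a (u i) (w i)) - (\<Sum>i<m. bregman_tsallis a (u i) (w' i))
      + D^2 / (1-a) * (\<Sum>i<m. w i) + (11/5) * \<epsilon> * (\<Sum>i<m. ln (w' i) - ln (w i))
      + (11/5) * \<epsilon> * D / (1-a) * (\<Sum>i<m. w i powr (1-a))"
    by (simp only: sum.distrib sum_subtractf flip: sum_distrib_left)
  also have "\<dots> \<le> (\<Sum>i<m. bregman_tsallis a (u i) (w i)) - (\<Sum>i<m. bregman_tsallis a (u i) (w' i))
      + D^2 / (1-a) * (\<Sum>i<m. w i) + (11/5) * \<epsilon> * (\<Sum>i<m. ln (w' i) - ln (w i))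
      + (11/5) * \<epsilon> * D / (1-a) * real m powr a"
    using sum_powr_le_card_powr[of "{..<m}" w "1-a"] w_pos w_sum a \<epsilon>
    by (intro add_left_mono mult_left_mono) (auto simp: D_def less_imp_le)
  finally show ?thesis
    using w_sum by simp
qed

end

section \<open>Runs of Algorithm 1 with a long horizon\<close>

lemma regular_of_mirror_le:
  fixes a w X \<epsilon> :: real
  assumes a: "0 < a" "a < 1" and w: "0 < w" "w \<le> 1" and x: "w powr (a-1) \<le> X" and \<epsilon>: "0 \<le> \<epsilon>"
    and small: "\<epsilon> * (1 + X powr (a/(1-a))) \<le> 1/30"
  shows "\<epsilon> * (1 + 1/w) \<le> (1/30) * w powr (a-1)" and "\<epsilon> \<le> w powr a"
proof -
  define x b where "x = w powr (a-1)" and "b = a/(1-a)"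
  have x1: "1 \<le> x"
    using a w by (simp add: x_def one_le_powr_of_le_one)
  have b: "0 \<le> b"
    using a by (simp add: b_def)
  have xb: "1 \<le> x powr b" "x powr b \<le> X powr b"
    using x1 x b by (auto simp: x_def intro: ge_one_powr_ge_zero powr_mono2)
  have "(a-1) * (1 + b) = -1"
    using a by (simp add: b_def field_simps)
  then have "1/w = x powr (1 + b)"
    using w by (simp add: x_def powr_powr powr_minus_divide)
  then have inv_w: "1/w = x * x powr b"
    using x1 by (simp add: powr_add)
  have "\<epsilon> * (1 + 1/w) \<le> \<epsilon> * (x + x * X powr b)"
    using \<epsilon> x1 xb by (auto simp: inv_w intro!: mult_left_mono add_mono)
  also have "\<dots> = x * (\<epsilon> * (1 + X powr b))"
    by (simp add: algebra_simps)
  also have "\<dots> \<le> x * (1/30)"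
    using small x1 by (intro mult_left_mono) (auto simp: b_def)
  finally show "\<epsilon> * (1 + 1/w) \<le> (1/30) * w powr (a-1)"
    by (simp add: x_def mult.commute)
  have "(a-1) * (- b) = a"
    using a by (simp add: b_def field_simps)
  then have w_a: "w powr a = 1 / x powr b"
    by (simp add: x_def powr_powr flip: powr_minus_divide)
  have "\<epsilon> * X powr b \<le> 1"
    using small \<epsilon> xb by (simp add: b_def algebra_simps)
  moreover have "0 < X powr b"
    using xb by linarith
  ultimately have "\<epsilon> \<le> 1 / X powr b"
    by (simp add: pos_le_divide_eq)
  also have "\<dots> \<le> 1 / x powr b"
    using xb by (intro divide_left_mono mult_pos_pos) auto
  finally show "\<epsilon> \<le> w powr a"
    by (simp add: w_a)
qed

lemma eta_t_eq_eta0: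
  assumes "1 \<le> t" and "0 < m" and "\<forall>s\<in>{1..t}. \<forall>i<m. eta0 a m n T \<le> w s i powr a"
  shows "eta_t a m n T w t = eta0 a m n T"
proof -
  have "{..<m} \<noteq> {}"
    using assms(2) by auto
  then have "eta_cand a m n T w s = eta0 a m n T" if "s \<in> {1..t}" for s
    using assms that by (auto simp: eta_cand_def Min_ge_iff)
  then have "eta_cand a m n T w ` {1..t} = {eta0 a m n T}"
    using assms(1) by auto
  then show ?thesis
    by (simp add: eta_t_def)
qed

locale alg1_large_horizon =
  fixes a :: real and m n T :: nat
    and P :: "nat \<Rightarrow> nat \<Rightarrow> nat \<Rightarrow> real" and J :: "nat \<Rightarrow> nat" and w :: "nat \<Rightarrow> nat \<Rightarrow> real"
  assumes a: "0 < a" "a < 1/2" and m: "1 \<le> m" and n: "1 \<le> n" and T: "3 \<le> T"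
    and run: "alg1_run a m n T P J w" and small_grad: "small_gradient m n T P J w"
    and large_T: "(1 / sqrt T) * (1 + (4 * m * sqrt T) powr (a/(1-a))) \<le> 1/30"
      "(1 / sqrt T) * ((11/5) * m * ln m + 2) \<le> 2"
begin

abbreviation \<eta> :: real where "\<eta> \<equiv> eta0 a m n T"

definition scale :: real where "scale = \<eta> * (12 * real n * ln T)"

definition drift :: real where "drift = scale * (1 + (11/10) * m)"

definition mirror_cap :: real where "mirror_cap = real m powr (1-a) + T * drift"

lemma ln_T: "1 \<le> ln T"
proof -
  have "exp 1 \<le> real T"
    using exp_le T by linarith
  then show ?thesis
    using ln_mono[of "exp 1" T] by simp
qed

lemma eta_eq: "\<eta> = 1 / (12 * real m powr ((1+a)/2) * real n * sqrt T * ln T)"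
  by (simp add: eta0_def field_simps)

lemma eta_pos: "0 < \<eta>"
  using m n T ln_T by (simp add: eta_eq)

lemma scale_eq: "scale = 1 / (sqrt T * real m powr ((1+a)/2))"
  using n T ln_T by (simp add: scale_def eta_eq field_simps)

lemma scale_pos: "0 < scale"
  using m T by (simp add: scale_eq)

lemma scale_le: "scale \<le> 1 / sqrt T"
proof -
  have "1 \<le> real m powr ((1+a)/2)"
    using m a by (intro ge_one_powr_ge_zero) auto
  then show ?thesis
    using T by (simp add: scale_eq frac_le)
qed

lemma eta_bound_le: "\<eta> * (12 * real n * ln T + n) \<le> 2 * scale"
proof -
  have "real n \<le> 12 * real n * ln T"
    using n ln_T by simp
  then show ?thesis
    using eta_pos by (simp add: scale_def distrib_left mult_left_mono)
qed

lemma T_scale_square: "T * scale^2 = 1 / real m powr (1+a)"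
proof -
  have "(real m powr ((1+a)/2))^2 = real m powr ((1+a)/2 + (1+a)/2)"
    by (simp only: power2_eq_square powr_add)
  then have "(real m powr ((1+a)/2))^2 = real m powr (1+a)"
    by simp
  then show ?thesis
    using T by (simp add: scale_eq power_mult_distrib power_divide)
qed

lemma T_drift_le: "T * drift \<le> (21/10) * m * sqrt T"
proof -
  have "T * scale = sqrt T / real m powr ((1+a)/2)"
    using real_div_sqrt[of T] by (simp add: scale_eq flip: divide_divide_eq_left)
  also have "\<dots> \<le> sqrt T / 1"
    using m a by (intro divide_left_mono) (auto intro: ge_one_powr_ge_zero)
  finally have "T * scale * (1 + (11/10) * m) \<le> sqrt T * ((21/10) * m)"
    using m by (intro mult_mono) auto
  then show ?thesis
    by (simp add: drift_def algebra_simps)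
qed

lemma mirror_cap_le: "mirror_cap \<le> 4 * m * sqrt T"
proof -
  have "real m powr (1-a) \<le> real m"
    using m a powr_mono[of "1-a" 1 "real m"] by simp
  moreover have "real m \<le> real m * sqrt T"
    using T mult_left_mono[of 1 "sqrt T" "real m"] by simp
  moreover have "real (4 * m) * sqrt T = 4 * (real m * sqrt T)"
    by simp
  ultimately show ?thesis
    using T_drift_le unfolding mirror_cap_def by linarith
qed

lemma scale_mirror_cap: "scale * (1 + mirror_cap powr (a/(1-a))) \<le> 1/30"
proof -
  have "0 \<le> mirror_cap"
    using scale_pos by (simp add: mirror_cap_def drift_def)
  then have "mirror_cap powr (a/(1-a)) \<le> (4 * m * sqrt T) powr (a/(1-a))"
    using mirror_cap_le a by (intro powr_mono2) auto
  then have "scale * (1 + mirror_cap powr (a/(1-a))) \<le> (1 / sqrt T) * (1 + (4 * m * sqrt T) powr (a/(1-a)))"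
    using scale_le scale_pos by (intro mult_mono) auto
  then show ?thesis
    using large_T(1) by linarith
qed

lemma eta_le_scale: "\<eta> \<le> scale"
proof -
  have "1 * 1 \<le> (12 * real n) * ln T"
    using n ln_T by (intro mult_mono) auto
  then show ?thesis
    using eta_pos mult_left_mono[of 1 "12 * real n * ln T" \<eta>] by (simp add: scale_def)
qed

lemma reports_valid: "t \<in> {1..T} \<Longrightarrow> (\<forall>i<m. \<forall>j<n. 0 < P t i j) \<and> J t < n"
  using run unfolding alg1_run_def by blast

lemma iterate_first: "i < m \<Longrightarrow> w 1 i = 1 / m"
  using run unfolding alg1_run_def by blast

lemma iterate_simplex: "t \<in> {1..T} \<Longrightarrow> w t \<in> prob_simplex m"
  using run unfolding alg1_run_def by blast

lemma iterate_pos: "t \<in> {1..T} \<Longrightarrow> i < m \<Longrightarrow> 0 < w t i"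
  using run unfolding alg1_run_def by blast

lemma iterate_sum: "t \<in> {1..T} \<Longrightarrow> (\<Sum>i<m. w t i) = 1"
  using iterate_simplex by (simp add: prob_simplex_def)

lemma iterate_le_1: "t \<in> {1..T} \<Longrightarrow> i < m \<Longrightarrow> w t i \<le> 1"
  using member_le_sum[of i "{..<m}" "w t"] iterate_pos iterate_sum by (simp add: less_imp_le)

lemma grad_bounds:
  "t \<in> {1..T} \<Longrightarrow> i < m \<Longrightarrow>
     - (12 * real n * ln T) / w t i \<le> grad m n P J t (w t) i \<and> grad m n P J t (w t) i \<le> 12 * real n * ln T"
  using small_grad unfolding small_gradient_def by blast

lemma regular_at:
  assumes "t \<in> {1..T}" and "\<forall>i<m. w t i powr (a-1) \<le> mirror_cap" and "i < m"
  shows "scale * (1 + 1 / w t i) \<le> (1/30) * w t i powr (a-1)" and "\<eta> \<le> w t i powr a"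
  using regular_of_mirror_le[of a "w t i" mirror_cap scale] assms a scale_pos scale_mirror_cap
    iterate_pos iterate_le_1 eta_le_scale
  by auto

lemma run_update:
  "t \<in> {1..<T} \<Longrightarrow> \<exists>c. \<forall>i<m. - (w (t + 1) i powr (a - 1))
     = - (w t i powr (a - 1)) - eta_t a m n T w t * grad m n P J t (w t) i + c"
  using run unfolding alg1_run_def by blast

lemma step_at:
  assumes t: "1 \<le> t" "t < T" and capped: "\<forall>s\<in>{1..t}. \<forall>i<m. w s i powr (a-1) \<le> mirror_cap"
  shows "\<exists>c. tsallis_step a scale c m (w t) (w (Suc t)) (\<lambda>i. \<eta> * grad m n P J t (w t) i)"
proof -
  have "eta_t a m n T w t = \<eta>"
    using t capped m regular_at(2) by (intro eta_t_eq_eta0) auto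
  then obtain c where c: "\<forall>i<m. - (w (Suc t) i powr (a - 1))
      = - (w t i powr (a - 1)) - \<eta> * grad m n P J t (w t) i + c"
    using run_update[of t] t by auto
  have "tsallis_step a scale c m (w t) (w (Suc t)) (\<lambda>i. \<eta> * grad m n P J t (w t) i)"
  proof unfold_locales
    show "\<forall>i<m. - scale / w t i \<le> \<eta> * grad m n P J t (w t) i \<and> \<eta> * grad m n P J t (w t) i \<le> scale"
    proof (intro allI impI)
      fix i assume "i < m"
      then have "\<eta> * (- (12 * real n * ln T) / w t i) \<le> \<eta> * grad m n P J t (w t) i
          \<and> \<eta> * grad m n P J t (w t) i \<le> \<eta> * (12 * real n * ln T)"
        using grad_bounds[of t i] t eta_pos by (intro conjI mult_left_mono) auto
      then show "- scale / w t i \<le> \<eta> * grad m n P J t (w t) i \<and> \<eta> * grad m n P J t (w t) i \<le> scale"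
        by (simp add: scale_def)
    qed
    show "\<forall>i<m. w (Suc t) i powr (a-1) = w t i powr (a-1) + \<eta> * grad m n P J t (w t) i - c"
      using c by (simp add: algebra_simps)
  qed (use a iterate_pos iterate_sum t scale_pos regular_at(1)[of t] capped in auto)
  then show ?thesis ..
qed

lemma drift_nonneg: "0 \<le> drift"
  using scale_pos by (simp add: drift_def)

text \<open>Through \<open>regular_at\<close>, this bound keeps \<open>\<eta>\<^sub>t = \<eta>\<close> along the whole run.\<close>

lemma mirror_le_drift:
  assumes "s \<in> {1..T}" and "i < m"
  shows "w s i powr (a-1) \<le> real m powr (1-a) + (real s - 1) * drift"
proof -
  have "\<forall>s'\<in>{1..s}. \<forall>i<m. w s' i powr (a-1) \<le> real m powr (1-a) + (real s' - 1) * drift"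
    if "1 \<le> s" "s \<le> T" for s
    using that
  proof (induction s rule: nat_induct_at_least)
    case base
    have "w 1 i powr (a-1) = real m powr (1-a)" if "i < m" for i
      using iterate_first[OF that] m by (simp add: powr_divide flip: powr_minus_divide)
    then show ?case
      by auto
  next
    case (Suc s)
    then have IH: "\<forall>s'\<in>{1..s}. \<forall>i<m. w s' i powr (a-1) \<le> real m powr (1-a) + (real s' - 1) * drift"
      by simp
    have "(real s' - 1) * drift \<le> T * drift" if "s' \<in> {1..s}" for s'
      using that Suc drift_nonneg by (intro mult_right_mono) auto
    then have "\<forall>s'\<in>{1..s}. \<forall>i<m. w s' i powr (a-1) \<le> mirror_cap"
      using IH unfolding mirror_cap_def by fastforce
    then obtain c where "tsallis_step a scale c m (w s) (w (Suc s)) (\<lambda>i. \<eta> * grad m n P J s (w s) i)"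
      using step_at Suc by (metis Suc_le_lessD)
    then have "w (Suc s) i powr (a-1) \<le> w s i powr (a-1) + drift" if "i < m" for i
      using tsallis_step.mirror_growth that by (fastforce simp: drift_def)
    moreover have "w s i powr (a-1) \<le> real m powr (1-a) + (real s - 1) * drift" if "i < m" for i
      using IH Suc that by auto
    ultimately have "w (Suc s) i powr (a-1) \<le> real m powr (1-a) + (real (Suc s) - 1) * drift"
      if "i < m" for i
      using that by (fastforce simp: algebra_simps)
    then show ?case
      using IH by (auto simp: le_Suc_eq)
  qed
  then show ?thesis
    using assms by auto
qed

lemma mirror_le_cap: "s \<in> {1..T} \<Longrightarrow> i < m \<Longrightarrow> w s i powr (a-1) \<le> mirror_cap"
  using mirror_le_drift[of s i] mult_right_mono[of "real s - 1" T drift] drift_nonneg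
  by (simp add: mirror_cap_def)

lemma step: "t \<in> {1..<T} \<Longrightarrow> \<exists>c. tsallis_step a scale c m (w t) (w (Suc t)) (\<lambda>i. \<eta> * grad m n P J t (w t) i)"
  using step_at mirror_le_cap by auto

text \<open>The logarithmic term absorbs the contribution of the coordinates that decrease in a step
  (see \<open>stability_of_mirror_decrease\<close>).\<close>

definition potential :: "(nat \<Rightarrow> real) \<Rightarrow> nat \<Rightarrow> real" where
  "potential u t = (\<Sum>i<m. bregman_tsallis a (u i) (w t i)) - (11/5) * scale * (\<Sum>i<m. ln (w t i))"

definition step_cost :: real where
  "step_cost = drift^2 / (1-a) + (11/5) * scale * drift * real m powr a / (1-a)"

lemma regret_step:
  assumes t: "t \<in> {1..<T}" and u: "u \<in> prob_simplex m"
  shows "\<eta> * (loss m n P J t (w t) - loss m n P J t u) \<le> potential u t - potential u (Suc t) + step_cost"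
proof -
  obtain c where "tsallis_step a scale c m (w t) (w (Suc t)) (\<lambda>i. \<eta> * grad m n P J t (w t) i)"
    using step t by blast
  then interpret tsallis_step a scale c m "w t" "w (Suc t)" "\<lambda>i. \<eta> * grad m n P J t (w t) i" .
  have "\<forall>i<m. \<forall>j<n. 0 < P t i j" "J t < n"
    using reports_valid[of t] t by auto
  then have "loss m n P J t (w t) + (\<Sum>i<m. grad m n P J t (w t) i * (u i - w t i)) \<le> loss m n P J t u"
    by (rule loss_ge_tangent)
  then have "loss m n P J t (w t) - loss m n P J t u \<le> (\<Sum>i<m. grad m n P J t (w t) i * (w t i - u i))"
    by (simp add: sum_subtractf right_diff_distrib)
  then have "\<eta> * (loss m n P J t (w t) - loss m n P J t u)
      \<le> (\<Sum>i<m. \<eta> * grad m n P J t (w t) i * (w t i - u i))"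
    using eta_pos by (simp add: mult.assoc mult_left_mono flip: sum_distrib_left)
  also have "\<dots> \<le> potential u t - potential u (Suc t) + step_cost"
    using inner_le_bregman_diff[of u] u
    by (simp add: prob_simplex_def potential_def step_cost_def drift_def sum_subtractf algebra_simps)
  finally show ?thesis .
qed

lemma regret_last:
  assumes u: "u \<in> prob_simplex m"
  shows "\<eta> * (loss m n P J T (w T) - loss m n P J T u) \<le> 2 * scale"
proof -
  have T1: "T \<in> {1..T}"
    using T by simp
  have "loss m n P J T (w T) \<le> (\<Sum>i<m. w T i * grad m n P J T (w T) i) + n"
    using loss_le_sum_mult_grad reports_valid[OF T1] by blast
  also have "\<dots> \<le> (\<Sum>i<m. w T i * (12 * real n * ln T)) + n"
    using iterate_pos[OF T1, THEN less_imp_le] grad_bounds[OF T1]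
    by (intro add_right_mono sum_mono mult_left_mono) auto
  also have "\<dots> = 12 * real n * ln T + n"
    using iterate_sum[OF T1] by (simp flip: sum_distrib_right)
  finally have "loss m n P J T (w T) \<le> 12 * real n * ln T + n" .
  moreover have "0 \<le> loss m n P J T u"
    using loss_nonneg reports_valid[OF T1] by blast
  ultimately have "\<eta> * (loss m n P J T (w T) - loss m n P J T u) \<le> \<eta> * (12 * real n * ln T + n)"
    using eta_pos by (intro mult_left_mono) auto
  also have "\<dots> \<le> 2 * scale"
    by (rule eta_bound_le)
  finally show ?thesis .
qed

lemma potential_nonneg:
  assumes "t \<in> {1..T}" and "u \<in> prob_simplex m"
  shows "0 \<le> potential u t"
proof -
  have "(\<Sum>i<m. ln (w t i)) \<le> 0"
    using assms iterate_pos iterate_le_1 by (intro sum_nonpos) auto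
  moreover have "0 \<le> (\<Sum>i<m. bregman_tsallis a (u i) (w t i))"
    using assms a iterate_pos by (intro sum_nonneg bregman_tsallis_nonneg) (auto simp: prob_simplex_def)
  moreover have "scale * (\<Sum>i<m. ln (w t i)) \<le> 0"
    using scale_pos \<open>(\<Sum>i<m. ln (w t i)) \<le> 0\<close> by (simp add: mult_nonneg_nonpos)
  ultimately show ?thesis
    unfolding potential_def by linarith
qed

lemma potential_first_le:
  assumes u: "u \<in> prob_simplex m"
  shows "potential u 1 \<le> (real m powr (1-a) - 1) / a + (11/5) * scale * (m * ln m)"
proof -
  have u0: "\<forall>i<m. 0 \<le> u i" and u_sum: "(\<Sum>i<m. u i) = 1"
    using u by (auto simp: prob_simplex_def)
  have "u i \<le> u i powr a" if "i < m" for i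
    using powr_mono'[of a 1 "u i"] member_le_sum[of i "{..<m}" u] u0 u_sum a that by simp
  then have "1 \<le> (\<Sum>i<m. u i powr a)"
    using u_sum sum_mono[of "{..<m}" u "\<lambda>i. u i powr a"] by simp
  moreover have "(\<Sum>i<m. bregman_tsallis a (u i) (w 1 i))
      = - (\<Sum>i<m. u i powr a) / a + real m * (1 / real m) powr a / a"
    using iterate_first u_sum m
    by (simp add: bregman_tsallis_def sum.distrib sum_subtractf sum_negf
        flip: sum_divide_distrib sum_distrib_left)
  moreover have "real m * (1 / real m) powr a = real m powr (1-a)"
    using m by (simp add: powr_divide powr_diff)
  moreover have "(\<Sum>i<m. ln (w 1 i)) = - (m * ln m)"
    using iterate_first m by (simp add: ln_div)
  ultimately show ?thesis
    using a by (simp add: potential_def divide_right_mono diff_divide_distrib)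
qed

lemma horizon_step_cost: "T * step_cost \<le> (441/50) * real m powr (1-a) + 231/25"
proof -
  have mm: "0 \<le> 1 + (11/10) * real m" "1 + (11/10) * real m \<le> (21/10) * real m"
    using m by auto
  have "T * drift^2 = (1 + (11/10) * real m)^2 * (T * scale^2)"
    by (simp add: drift_def power_mult_distrib)
  also have "\<dots> = (1 + (11/10) * real m)^2 / real m powr (1+a)"
    by (simp add: T_scale_square)
  also have "\<dots> \<le> ((21/10) * real m)^2 / real m powr (1+a)"
    using mm by (intro divide_right_mono power_mono) auto
  also have "\<dots> = (441/100) * (real m powr 2 / real m powr (1+a))"
    using m by (simp add: power_mult_distrib power_divide powr_numeral)
  also have "real m powr 2 / real m powr (1+a) = real m powr (1-a)"
    by (subst powr_diff [symmetric]) simp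
  finally have drift_part: "T * drift^2 \<le> (441/100) * real m powr (1-a)" .
  have "T * (scale * drift * real m powr a) = (1 + (11/10) * real m) * real m powr a * (T * scale^2)"
    by (simp add: drift_def power2_eq_square algebra_simps)
  also have "\<dots> = (1 + (11/10) * real m) * (real m powr a / real m powr (1+a))"
    by (simp add: T_scale_square)
  also have "real m powr a / real m powr (1+a) = 1 / real m"
    using m by (simp add: powr_minus_divide flip: powr_diff)
  also have "(1 + (11/10) * real m) * (1 / real m) \<le> (21/10) * real m * (1 / real m)"
    using mm by (intro mult_right_mono) auto
  finally have scale_part: "T * (scale * drift * real m powr a) \<le> 21/10"
    using m by simp
  have "T * step_cost = (T * drift^2 + (11/5) * (T * (scale * drift * real m powr a))) * (1 / (1-a))"
    by (simp add: step_cost_def algebra_simps)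
  also have "\<dots> \<le> ((441/100) * real m powr (1-a) + (11/5) * (21/10)) * 2"
    using drift_part scale_part a by (intro mult_mono) (auto simp: field_simps)
  finally show ?thesis
    by simp
qed

lemma step_cost_nonneg: "0 \<le> step_cost"
  using a scale_pos drift_nonneg by (simp add: step_cost_def)

lemma regret_sum_le:
  assumes u: "u \<in> prob_simplex m"
  shows "\<eta> * ((\<Sum>t=1..T. loss m n P J t (w t)) - (\<Sum>t=1..T. loss m n P J t u))
           \<le> (20 + 1/a) * real m powr (1-a)"
proof -
  have T1: "1 \<le> T"
    using T by simp
  have "\<eta> * ((\<Sum>t=1..T. loss m n P J t (w t)) - (\<Sum>t=1..T. loss m n P J t u))
      = (\<Sum>t=1..<T. \<eta> * (loss m n P J t (w t) - loss m n P J t u))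
        + \<eta> * (loss m n P J T (w T) - loss m n P J T u)"
    using T1 by (simp add: sum.last_plus sum_subtractf sum_distrib_left algebra_simps)
  also have "\<dots> \<le> (\<Sum>t=1..<T. potential u t - potential u (Suc t) + step_cost) + 2 * scale"
    using regret_step[OF _ u] regret_last[OF u] by (intro add_mono sum_mono) auto
  also have "\<dots> = potential u 1 - potential u T + real (T - 1) * step_cost + 2 * scale"
  proof -
    have "(\<Sum>t=1..<T. potential u t - potential u (Suc t)) = potential u 1 - potential u T"
      using sum_Suc_diff'[OF T1, of "potential u"] unfolding sum_subtractf by linarith
    then show ?thesis
      by (simp add: sum.distrib)
  qed
  also have "\<dots> \<le> (real m powr (1-a) - 1) / a + (11/5) * scale * (m * ln m) + T * step_cost + 2 * scale"
    using potential_first_le[OF u] potential_nonneg[OF _ u, of T] T1 step_cost_nonneg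
      mult_right_mono[of "real (T - 1)" T step_cost]
    by auto
  also have "\<dots> \<le> (real m powr (1-a) - 1) / a + (441/50) * real m powr (1-a) + 231/25 + 2"
  proof -
    have "scale * ((11/5) * m * ln m + 2) \<le> (1 / sqrt T) * ((11/5) * m * ln m + 2)"
      using scale_le m by (intro mult_right_mono) auto
    then show ?thesis
      using horizon_step_cost large_T(2) by (simp add: algebra_simps)
  qed
  also have "\<dots> \<le> (20 + 1/a) * real m powr (1-a)"
  proof -
    have "1 \<le> real m powr (1-a)"
      using m a by (intro ge_one_powr_ge_zero) auto
    moreover have "2 \<le> 1/a"
      using a by (simp add: field_simps)
    ultimately show ?thesis
      by (simp add: diff_divide_distrib algebra_simps)
  qed
  finally show ?thesis .
qed

lemma regret_le: "regret m n T P J w \<le> (240 + 12/a) * real m powr ((3-a)/2) * real n * sqrt T * ln T"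
proof -
  define B where "B = (20 + 1/a) * real m powr (1-a) / \<eta>"
  have "real m powr (1-a) * real m powr ((1+a)/2) = real m powr ((3-a)/2)"
    by (simp add: field_simps flip: powr_add)
  then have B_eq: "B = (240 + 12/a) * real m powr ((3-a)/2) * real n * sqrt T * ln T"
    unfolding B_def eta_eq by (simp add: algebra_simps)
  have "(\<Sum>t=1..T. loss m n P J t (w t)) - B \<le> (\<Sum>t=1..T. loss m n P J t u)"
    if "u \<in> prob_simplex m" for u
  proof -
    have "(\<Sum>t=1..T. loss m n P J t (w t)) - (\<Sum>t=1..T. loss m n P J t u) \<le> B"
      unfolding B_def using regret_sum_le[OF that] eta_pos
      by (subst pos_le_divide_eq) (auto simp: mult.commute)
    then show ?thesis
      by linarith
  qed
  moreover have "prob_simplex m \<noteq> {}"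
    using iterate_simplex[of 1] T by auto
  ultimately have "(\<Sum>t=1..T. loss m n P J t (w t)) - B \<le> (INF u\<in>prob_simplex m. \<Sum>t=1..T. loss m n P J t u)"
    by (intro cINF_greatest)
  then show ?thesis
    by (simp add: regret_def B_eq)
qed

end

lemma eventually_large_horizon:
  fixes a :: real and m :: nat
  assumes "0 < a" and "a < 1/2"
  shows "\<forall>\<^sub>F T in sequentially. 3 \<le> T
           \<and> (1 / sqrt T) * (1 + (4 * m * sqrt T) powr (a/(1-a))) \<le> 1/30
           \<and> (1 / sqrt T) * ((11/5) * m * ln m + 2) \<le> 2"
proof -
  define b where "b = a/(1-a)"
  have "b - 1 < 0"
    using assms by (simp add: b_def field_simps)
  have sqrt_T: "filterlim (\<lambda>T::nat. sqrt T) at_top sequentially"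
    by (rule filterlim_compose[OF sqrt_at_top filterlim_real_sequentially])
  have inv_sqrt_T: "((\<lambda>T::nat. 1 / sqrt T) \<longlongrightarrow> 0) sequentially"
    using tendsto_inverse_0_at_top[OF sqrt_T] by (simp add: inverse_eq_divide)
  have split: "(1 / sqrt T) * (1 + (4 * m * sqrt T) powr b)
      = 1 / sqrt T + (4 * m) powr b * sqrt T powr (b - 1)" if "1 \<le> T" for T :: nat
  proof -
    have "1 / sqrt T * sqrt T powr b = sqrt T powr (b - 1)"
      using that by (simp add: powr_diff)
    then show ?thesis
      by (simp add: powr_mult distrib_left flip: times_divide_eq_left)
  qed
  have "((\<lambda>T::nat. 1 / sqrt T + (4 * m) powr b * sqrt T powr (b - 1)) \<longlongrightarrow> 0 + (4 * m) powr b * 0) sequentially"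
    by (rule tendsto_add[OF inv_sqrt_T tendsto_mult[OF tendsto_const tendsto_neg_powr[OF \<open>b - 1 < 0\<close> sqrt_T]]])
  then have "\<forall>\<^sub>F T in sequentially. 1 / sqrt T + (4 * m) powr b * sqrt T powr (b - 1) < 1/30"
    by (intro order_tendstoD(2)) auto
  moreover have "\<forall>\<^sub>F T in sequentially. (1 / sqrt T) * ((11/5) * m * ln m + 2) < 2"
    using tendsto_mult_right_zero[OF inv_sqrt_T] by (intro order_tendstoD(2)) auto
  moreover have "\<forall>\<^sub>F T in sequentially. 3 \<le> T"
    by (rule eventually_ge_at_top)
  ultimately show ?thesis
    unfolding b_def[symmetric]
  proof eventually_elim
    case (elim T)
    then show ?case
      using split[of T] by simp
  qed
qed

theorem corollary2:
  fixes \<alpha> :: real and m n :: nat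
  assumes "0 < \<alpha>" and "\<alpha> < 1/2" and "1 \<le> m" and "1 \<le> n"
  shows "\<exists>T0::nat. \<forall>T\<ge>T0. \<forall>P J w.
           alg1_run \<alpha> m n T P J w \<and> small_gradient m n T P J w \<longrightarrow>
           regret m n T P J w \<le>
             (240 + 12 / \<alpha>) * real m powr ((3 - \<alpha>) / 2) * real n * sqrt T * ln T"
proof -
  obtain T0 :: nat where T0: "\<forall>T\<ge>T0. 3 \<le> T
      \<and> (1 / sqrt T) * (1 + (4 * m * sqrt T) powr (\<alpha>/(1-\<alpha>))) \<le> 1/30
      \<and> (1 / sqrt T) * ((11/5) * m * ln m + 2) \<le> 2"
    using eventually_large_horizon[OF assms(1,2), of m] unfolding eventually_sequentially by (rule exE)
  show ?thesis
  proof (intro exI allI impI)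
    fix T P J w
    assume "T0 \<le> T" and "alg1_run \<alpha> m n T P J w \<and> small_gradient m n T P J w"
    then interpret alg1_large_horizon \<alpha> m n T P J w
      using assms T0 by unfold_locales auto
    show "regret m n T P J w \<le> (240 + 12 / \<alpha>) * real m powr ((3 - \<alpha>) / 2) * real n * sqrt T * ln T"
      by (rule regret_le)
  qed
qed

end
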